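(* Let $a,b\in \mathcal{A}^{\mathrm{gcEP}}$. Then the following are equivalent: (1) $a\leq^{\mathrm{gcEP}}b$. (2) There exist $e_1=aa^{\mathrm{gcEP}}$ and $e_2=e_2^*=e_2^2$ such that $a=\begin{pmatrix} t_1&s_1&s_2\\ 0&n_1&n_2\\ 0&n_3&n_4\end{pmatrix}_{e\times e}$, $b=\begin{pmatrix} t_1&s_1&s_2\\ 0&t_3&t_4\\ 0&0&t_5\end{pmatrix}_{e\times e}$, where $e=\{ e_1,e_2,1-e_1-e_2\}$, $t_1\in (e_1\mathcal{A}e_1)^{-1}$, $t_3\in (e_2\mathcal{A}e_2)^{-1}$ and $n_1+n_2+n_3+n_4,\ t_5\in \mathcal{A}^{qnil}$.
   Context: $\mathcal{A}$ is a complex Banach *-algebra with identity; $\mathcal{A}^{qnil}$ is the set of quasinilpotent elements. An element $a$ has a generalized core-EP inverse if there is $x$ with $x=ax^2$, $(ax)^*=ax$, $\lim_{n\to\infty}\|a^n-xa^{n+1}\|^{1/n}=0$; this $x$ is unique, denoted $a^{\mathrm{gcEP}}$, and $\mathcal{A}^{\mathrm{gcEP}}$ is the set of such $a$. For $a,b\in\mathcal{A}^{\mathrm{gcEP}}$, $a\leq^{\mathrm{gcEP}}b$ means $aa^{\mathrm{gcEP}}=ba^{\mathrm{gcEP}}$ and $a^{\mathrm{gcEP}}a=a^{\mathrm{gcEP}}b$. For a set $e=\{e_1,\dots,e_n\}$ of idempotents with $1=e_1+\cdots+e_n$ and $e_ie_j=0$ ($i\neq j$), an element $x$ is written in matrix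 form $x=(e_ixe_j)_{e\times e}$. *)

theory Defs
  imports "HOL-Analysis.Analysis"
begin

class complex_banach_star_algebra = real_normed_algebra_1 + banach +
  fixes scaleC :: "complex \<Rightarrow> 'a \<Rightarrow> 'a"
    and adj :: "'a \<Rightarrow> 'a"
  assumes scaleC_of_real: "scaleC (of_real r) x = scaleR r x"
    and scaleC_add_left: "scaleC (c + d) x = scaleC c x + scaleC d x"
    and scaleC_add_right: "scaleC c (x + y) = scaleC c x + scaleC c y"
    and scaleC_scaleC: "scaleC c (scaleC d x) = scaleC (c * d) x"
    and scaleC_one: "scaleC 1 x = x"
    and norm_scaleC: "norm (scaleC c x) = norm c * norm x"
    and mult_scaleC_left: "scaleC c x * y = scaleC c (x * y)"
    and mult_scaleC_right: "x * scaleC c y = scaleC c (x * y)"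
    and adj_adj: "adj (adj x) = x"
    and adj_add: "adj (x + y) = adj x + adj y"
    and adj_mult: "adj (x * y) = adj y * adj x"
    and adj_scaleC: "adj (scaleC c x) = scaleC (cnj c) (adj x)"

context complex_banach_star_algebra
begin

text \<open>Quasinilpotent elements: spectral radius zero, i.e. lim ||a^n||^(1/n) = 0.\<close>
definition qnil :: "'a set" where
  "qnil = {a. (\<lambda>n. root n (norm (a ^ n))) \<longlonglongrightarrow> 0}"

definition is_gcEP :: "'a \<Rightarrow> 'a \<Rightarrow> bool" where
  "is_gcEP a x \<longleftrightarrow> x = a * x ^ 2 \<and> adj (a * x) = a * x \<and>
     (\<lambda>n. root n (norm (a ^ n - x * a ^ (n + 1)))) \<longlonglongrightarrow> 0"

definition gcEP_set :: "'a set" where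
  "gcEP_set = {a. \<exists>x. is_gcEP a x}"

definition gcEP :: "'a \<Rightarrow> 'a" where
  "gcEP a = (THE x. is_gcEP a x)"

definition gcEP_le :: "'a \<Rightarrow> 'a \<Rightarrow> bool" where
  "gcEP_le a b \<longleftrightarrow> a * gcEP a = b * gcEP a \<and> gcEP a * a = gcEP a * b"

definition corner_inv :: "'a \<Rightarrow> 'a \<Rightarrow> bool" where
  "corner_inv p t \<longleftrightarrow> t \<in> {p * z * p | z. True} \<and>
     (\<exists>y \<in> {p * z * p | z. True}. t * y = p \<and> y * t = p)"

end

end

(*
  Let x = a^gcEP and p = a x. The defining limit says that a^n - x a^(n+1) decays faster than
  every geometric sequence, so an element that equals u (a^n - x a^(n+1)) v w^n for every n
  must vanish. This turns the limit condition into algebra: x a x = x, p is a projection with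
  (1 - p) a p = 0, x is unique, and (1 - p) a (1 - p), whose powers are (1 - p)(a^n - x a^(n+1)),
  is quasinilpotent.

  If a <= b then b x = p, so b^(k+1) x x^k = p for all k and the same vanishing argument gives
  q p = p for q = b b^gcEP; hence e2 = q - p is a projection orthogonal to p, and {p, e2, 1 - q}
  puts a and b into the stated block form. The block t1 = p a p is inverted in pAp by x, and
  t3 = e2 b e2 is invertible in e2Ae2 because it is the lower diagonal block of q b q, which is
  block upper triangular, invertible in qAq (by b^gcEP) and has the invertible upper block t1.
  Conversely, the first row and column of the block matrices give a p = b p and p a = p b,
  that is a x = b x and x a = x b.
*)
theory Submission
  imports Defs
begin

definition root_null :: "(nat \<Rightarrow> 'a::real_normed_vector) \<Rightarrow> bool" where
  "root_null f \<longleftrightarrow> (\<lambda>n. root n (norm (f n))) \<longlonglongrightarrow> 0"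

lemma root_nullI:
  assumes "\<forall>\<^sub>F n in sequentially. root n (norm (f n)) \<le> h n" and "h \<longlonglongrightarrow> 0"
  shows "root_null f"
  unfolding root_null_def
  by (rule tendsto_sandwich[OF always_eventually assms(1) tendsto_const assms(2)])
    (simp add: real_root_ge_zero)

lemma root_null_dominated:
  fixes f :: "nat \<Rightarrow> 'a::real_normed_vector" and g :: "nat \<Rightarrow> 'b::real_normed_vector"
  assumes f: "root_null f" and bound: "\<forall>\<^sub>F n in sequentially. norm (g n) \<le> C * norm (f n) * M ^ n"
  shows "root_null g"
proof -
  define C' where "C' = \<bar>C\<bar> + 1"
  have "\<forall>\<^sub>F n in sequentially. root n (norm (g n)) \<le> root n C' * root n (norm (f n)) * \<bar>M\<bar>"
    using bound eventually_gt_at_top[of 0]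
  proof eventually_elim
    case (elim n)
    have "C * norm (f n) * M ^ n \<le> \<bar>C\<bar> * norm (f n) * \<bar>M\<bar> ^ n"
      by (metis abs_ge_self abs_mult abs_norm_cancel power_abs)
    also have "\<dots> \<le> C' * norm (f n) * \<bar>M\<bar> ^ n"
      by (intro mult_right_mono) (auto simp: C'_def)
    finally have "C * norm (f n) * M ^ n \<le> C' * norm (f n) * \<bar>M\<bar> ^ n" .
    with elim have "root n (norm (g n)) \<le> root n (C' * norm (f n) * \<bar>M\<bar> ^ n)"
      by simp
    also have "\<dots> = root n C' * root n (norm (f n)) * \<bar>M\<bar>"
      using elim(2) by (simp add: real_root_mult real_root_power_cancel)
    finally show ?case .
  qed
  moreover have "(\<lambda>n. root n C' * root n (norm (f n)) * \<bar>M\<bar>) \<longlonglongrightarrow> 1 * 0 * \<bar>M\<bar>"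
    using f unfolding root_null_def
    by (intro tendsto_mult tendsto_const LIMSEQ_root_const) (simp add: C'_def)
  ultimately show ?thesis
    by (auto intro: root_nullI)
qed

lemma root_null_diff:
  fixes f g :: "nat \<Rightarrow> 'a::real_normed_vector"
  assumes f: "root_null f" and g: "root_null g"
  shows "root_null (\<lambda>n. f n - g n)"
proof -
  have "\<forall>\<^sub>F n in sequentially.
      root n (norm (f n - g n)) \<le> root n 2 * max (root n (norm (f n))) (root n (norm (g n)))"
    using eventually_gt_at_top[of 0]
  proof eventually_elim
    case (elim n)
    have "norm (f n - g n) \<le> 2 * max (norm (f n)) (norm (g n))"
      using norm_triangle_ineq4[of "f n" "g n"] by linarith
    then have "root n (norm (f n - g n)) \<le> root n 2 * root n (max (norm (f n)) (norm (g n)))"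
      using elim by (simp add: real_root_mult[symmetric])
    also have "root n (max (norm (f n)) (norm (g n)))
        = max (root n (norm (f n))) (root n (norm (g n)))"
      using elim by (simp add: max_def)
    finally show ?case .
  qed
  moreover have "(\<lambda>n. root n 2 * max (root n (norm (f n))) (root n (norm (g n)))) \<longlonglongrightarrow> 1 * max 0 0"
    using f g unfolding root_null_def
    by (intro tendsto_mult tendsto_max LIMSEQ_root_const) simp_all
  ultimately show ?thesis
    by (auto intro: root_nullI)
qed

lemma root_null_const_iff: "root_null (\<lambda>n. z) \<longleftrightarrow> z = 0"
proof
  assume "root_null (\<lambda>n. z)"
  moreover have "z \<noteq> 0 \<Longrightarrow> (\<lambda>n. root n (norm z)) \<longlonglongrightarrow> 1"
    by (simp add: LIMSEQ_root_const)
  ultimately show "z = 0"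
    unfolding root_null_def using LIMSEQ_unique by fastforce
qed (simp add: root_null_def)

lemma root_null_factor_eq_0:
  fixes f :: "nat \<Rightarrow> 'a::real_normed_algebra_1"
  assumes f: "root_null f" and z: "\<And>n. z = u * f n * v * w ^ n"
  shows "z = 0"
proof -
  have "norm z \<le> (norm u * norm v) * norm (f n) * norm w ^ n" for n
  proof -
    have "norm (u * f n * v) \<le> norm u * norm (f n) * norm v"
      by (meson mult_right_mono norm_ge_zero norm_mult_ineq order_trans)
    have "norm (u * f n * v * w ^ n) \<le> norm (u * f n * v) * norm (w ^ n)"
      by (rule norm_mult_ineq)
    also have "\<dots> \<le> norm u * norm (f n) * norm v * norm w ^ n"
      by (intro mult_mono \<open>norm (u * f n * v) \<le> _\<close> norm_power_ineq) auto
    finally show ?thesis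
      by (simp add: z[of n] mult_ac)
  qed
  then have "root_null (\<lambda>n. z)"
    by (intro root_null_dominated[OF f, where C = "norm u * norm v" and M = "norm w"]
        always_eventually) auto
  then show ?thesis
    by (simp add: root_null_const_iff)
qed

lemma power_mult_power_eq:
  fixes b :: "'a::monoid_mult"
  assumes "b * x = p" and "p * x = x"
  shows "b ^ k * p * x ^ k = p"
proof (induction k)
  case (Suc k)
  have "b ^ Suc k * p * x ^ Suc k = b ^ k * (b * (p * x)) * x ^ k"
    unfolding power_Suc2[of b] power_Suc[of x] by (simp add: mult.assoc)
  also have "\<dots> = b ^ k * p * x ^ k"
    using assms by simp
  finally show ?case
    using Suc.IH by simp
qed simp

lemma power_compress_upper_triangular:
  fixes a p :: "'a::ring_1"
  assumes "(1 - p) * a * p = 0"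
  shows "((1 - p) * a * (1 - p)) ^ Suc n = (1 - p) * a ^ Suc n"
proof -
  have "(1 - p) * a * (1 - p) = (1 - p) * a"
    using assms by (simp add: algebra_simps)
  moreover have "((1 - p) * a) ^ Suc n = (1 - p) * a ^ Suc n"
  proof (induction n)
    case (Suc n)
    have "((1 - p) * a) ^ Suc (Suc n) = (1 - p) * a * ((1 - p) * a ^ Suc n)"
      by (simp only: power_Suc[of _ "Suc n"] Suc.IH)
    also have "\<dots> = (1 - p) * a ^ Suc (Suc n) - (1 - p) * a * p * a ^ Suc n"
      by (simp add: algebra_simps)
    finally show ?case
      using assms by simp
  qed simp
  ultimately show ?thesis
    by simp
qed

lemma mult_right_eq_by_rows:
  fixes u v :: "'a::ring_1"
  assumes "e1 + e2 + e3 = 1"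
    and "e1 * u * c = e1 * v * c" "e2 * u * c = e2 * v * c" "e3 * u * c = e3 * v * c"
  shows "u * c = v * c"
proof -
  have "u * c = (e1 + e2 + e3) * u * c"
    using assms(1) by simp
  also have "\<dots> = (e1 + e2 + e3) * v * c"
    using assms(2-4) by (simp add: distrib_right)
  finally show ?thesis
    using assms(1) by simp
qed

lemma mult_left_eq_by_columns:
  fixes u v :: "'a::ring_1"
  assumes "e1 + e2 + e3 = 1"
    and "c * u * e1 = c * v * e1" "c * u * e2 = c * v * e2" "c * u * e3 = c * v * e3"
  shows "c * u = c * v"
proof -
  have "c * u = c * u * (e1 + e2 + e3)"
    using assms(1) by simp
  also have "\<dots> = c * v * (e1 + e2 + e3)"
    using assms(2-4) by (simp add: distrib_left)
  finally show ?thesis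
    using assms(1) by simp
qed

lemma adj_diff: "adj (x - y) = adj x - adj (y::'a::complex_banach_star_algebra)"
  by (metis adj_add eq_diff_eq)

lemma selfadjoint_absorb_sym:
  fixes p q :: "'a::complex_banach_star_algebra"
  assumes "adj p = p" and "adj q = q" and "q * p = p"
  shows "p * q = p"
  by (metis assms adj_mult)

lemma qnil_iff_root_null: "(c::'a::complex_banach_star_algebra) \<in> qnil \<longleftrightarrow> root_null (\<lambda>n. c ^ n)"
  by (simp add: qnil_def root_null_def)

lemma corner_invI:
  fixes p t s :: "'a::complex_banach_star_algebra"
  assumes "p * t * p = t" and "p * s * p = s" and "t * s = p" and "s * t = p"
  shows "corner_inv p t"
  unfolding corner_inv_def using assms by (metis (mono_tags, lifting) mem_Collect_eq)

lemma corner_invE: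
  fixes p t :: "'a::complex_banach_star_algebra"
  assumes "corner_inv p t" and "p * p = p"
  obtains s where "p * t * p = t" "p * s * p = s" "t * s = p" "s * t = p"
proof -
  have corner: "p * (p * z * p) * p = p * z * p" for z
    using assms(2) by (metis mult.assoc)
  from assms(1) obtain z s'
    where "t = p * z * p" "s' \<in> {p * z * p | z. True}" "t * s' = p" "s' * t = p"
    unfolding corner_inv_def by blast
  with corner show ?thesis
    using that by blast
qed

context
  fixes a x :: "'a::complex_banach_star_algebra"
  assumes gc: "is_gcEP a x"
begin

lemma gcEP_root_null: "root_null (\<lambda>n. a ^ n - x * a ^ (n + 1))"
  using gc by (simp add: is_gcEP_def root_null_def)

lemma gcEP_adj_proj: "adj (a * x) = a * x"
  using gc by (simp add: is_gcEP_def)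

lemma gcEP_proj_mult: "a * x * x = x"
  using gc by (simp add: is_gcEP_def power2_eq_square mult.assoc)

lemma gcEP_power_proj: "a ^ k * (a * x) * x ^ k = a * x"
  using gcEP_proj_mult by (intro power_mult_power_eq) simp_all

lemma gcEP_power_Suc_proj: "a ^ (k + 1) * x * x ^ k = a * x"
  using gcEP_power_proj[of k] by (simp del: power_Suc add: power_Suc2 mult.assoc)

lemma gcEP_absorb:
  assumes r: "\<And>k. r = a ^ (k + 1) * z * w ^ k"
  shows "a * x * r = r"
proof -
  have "r - a * x * r = a * (a ^ k - x * a ^ (k + 1)) * z * w ^ k" for k
    by (subst (1 2) r[of k]) (simp add: algebra_simps)
  then have "r - a * x * r = 0"
    by (rule root_null_factor_eq_0[OF gcEP_root_null])
  then show ?thesis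
    by simp
qed

lemma gcEP_mult_mult_proj: "x * a * (a * x) = a * x"
proof -
  have "a * x - x * a * (a * x) = 1 * (a ^ k - x * a ^ (k + 1)) * (a * x) * x ^ k" for k
  proof -
    have "x * a ^ (k + 1) * (a * x) * x ^ k = x * a * (a ^ k * (a * x) * x ^ k)"
      by (simp add: mult.assoc)
    then show ?thesis
      using gcEP_power_proj[of k] by (simp add: algebra_simps)
  qed
  then have "a * x - x * a * (a * x) = 0"
    by (rule root_null_factor_eq_0[OF gcEP_root_null])
  then show ?thesis
    by simp
qed

lemma gcEP_mult_mult: "x * a * x = x"
  by (metis gcEP_mult_mult_proj gcEP_proj_mult mult.assoc)

lemma gcEP_proj_idem: "a * x * (a * x) = a * x"
  using gcEP_mult_mult by (simp add: mult.assoc)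

lemma gcEP_mult_proj: "x * (a * x) = x"
  using gcEP_mult_mult by (simp add: mult.assoc)

lemma gcEP_upper_triangular: "a * x * a * (a * x) = a * (a * x)"
proof -
  have "a * (a * x) = a ^ (k + 1) * (a * x) * x ^ k" for k
    using gcEP_power_proj[of k] by (simp add: mult.assoc)
  from gcEP_absorb[OF this] show ?thesis
    by (simp add: mult.assoc)
qed

lemma gcEP_corner_inv: "corner_inv (a * x) (a * x * a * (a * x))"
proof (rule corner_invI)
  show "a * x * (a * x * a * (a * x)) * (a * x) = a * x * a * (a * x)"
    by (metis gcEP_proj_idem mult.assoc)
  show "a * x * x * (a * x) = x"
    using gcEP_proj_mult gcEP_mult_proj by simp
  show "a * x * a * (a * x) * x = a * x"
    using gcEP_proj_mult gcEP_proj_idem by (simp add: mult.assoc)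
  show "x * (a * x * a * (a * x)) = a * x"
    using gcEP_mult_proj gcEP_mult_mult_proj by (simp add: mult.assoc)
qed

lemma gcEP_qnil: "(1 - a * x) * a * (1 - a * x) \<in> qnil"
proof -
  have below: "(1 - a * x) * a * (a * x) = 0"
    using gcEP_upper_triangular by (simp add: algebra_simps)
  have "(1 - a * x) * x = 0"
    using gcEP_proj_mult by (simp add: algebra_simps)
  then have compressed_power:
      "((1 - a * x) * a * (1 - a * x)) ^ n = (1 - a * x) * (a ^ n - x * a ^ (n + 1))"
    if "n > 0" for n
    using power_compress_upper_triangular[OF below, of "n - 1"] that
    by (simp add: right_diff_distrib mult.assoc[symmetric])
  have "\<forall>\<^sub>F n in sequentially. norm (((1 - a * x) * a * (1 - a * x)) ^ n)
      \<le> norm (1 - a * x) * norm (a ^ n - x * a ^ (n + 1)) * 1 ^ n"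
    using eventually_gt_at_top[of 0]
    by eventually_elim (simp add: compressed_power norm_mult_ineq)
  then show ?thesis
    unfolding qnil_iff_root_null by (rule root_null_dominated[OF gcEP_root_null])
qed

end

lemma gcEP_unique:
  fixes a x y :: "'a::complex_banach_star_algebra"
  assumes x: "is_gcEP a x" and y: "is_gcEP a y"
  shows "x = y"
proof -
  have "a * x * (a * y) = a * y" "a * y * (a * x) = a * x"
    using gcEP_absorb[OF x gcEP_power_Suc_proj[OF y, symmetric]]
      gcEP_absorb[OF y gcEP_power_Suc_proj[OF x, symmetric]] .
  then have proj: "a * y = a * x"
    by (metis selfadjoint_absorb_sym gcEP_adj_proj[OF x] gcEP_adj_proj[OF y])
  have "x - y = 1 * ((a ^ k - y * a ^ (k + 1)) - (a ^ k - x * a ^ (k + 1))) * x * x ^ k" for k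
  proof -
    have "(x - y) * (a ^ (k + 1) * x * x ^ k) = x * (a * x) - y * (a * y)"
      unfolding gcEP_power_Suc_proj[OF x] proj by (simp add: left_diff_distrib)
    then show ?thesis
      by (simp add: gcEP_mult_proj[OF x] gcEP_mult_proj[OF y] left_diff_distrib mult.assoc)
  qed
  moreover have "root_null (\<lambda>n. (a ^ n - y * a ^ (n + 1)) - (a ^ n - x * a ^ (n + 1)))"
    using root_null_diff[OF gcEP_root_null[OF y] gcEP_root_null[OF x]] .
  ultimately have "x - y = 0"
    using root_null_factor_eq_0 by blast
  then show ?thesis
    by simp
qed

lemma is_gcEP_gcEP:
  fixes a :: "'a::complex_banach_star_algebra"
  assumes "a \<in> gcEP_set"
  shows "is_gcEP a (gcEP a)"
proof -
  from assms obtain x where x: "is_gcEP a x"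
    unfolding gcEP_set_def by blast
  then have "gcEP a = x"
    unfolding gcEP_def using gcEP_unique by blast
  with x show ?thesis
    by simp
qed

lemma corner_inv_lower_block:
  fixes p e t :: "'a::complex_banach_star_algebra"
  assumes idem: "p * p = p" "e * e = e" and orth: "p * e = 0" "e * p = 0"
    and inv: "corner_inv (p + e) t" and inv_p: "corner_inv p (p * t * p)"
    and triangular: "e * t * p = 0"
  shows "corner_inv e (e * t * e)"
proof -
  define q where "q = p + e"
  have qq: "q * q = q" and eq: "e * q = e" and qp: "q * p = p"
    using idem orth by (simp_all add: q_def algebra_simps)
  obtain s where t: "q * t * q = t" and s: "q * s * q = s" and ts: "t * s = q" and st: "s * t = q"
    using inv qq unfolding q_def[symmetric] by (rule corner_invE)
  obtain w where w: "p * t * p * w = p"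
    using inv_p idem(1) by (rule corner_invE) metis
  have tq: "t * q = t" and sq: "s * q = s"
    using t s qq by (metis mult.assoc)+
  have "e * t = e * t * p + e * t * e"
    by (metis tq q_def distrib_left mult.assoc)
  then have et: "e * t * e = e * t"
    using triangular by simp
  (* the inverse s is block upper triangular as well *)
  have "e * s * t * p = e * (s * q) * t * p"
    using sq by simp
  also have "\<dots> = e * s * p * t * p + e * s * e * t * p"
    by (simp add: q_def algebra_simps)
  finally have "e * s * p * t * p = 0"
    using st eq qp orth triangular by (simp add: mult.assoc)
  then have "e * s * p = 0"
    by (metis w mult.assoc mult_zero_left)
  show ?thesis
  proof (rule corner_invI)
    show "e * (e * t * e) * e = e * t * e" "e * (e * s * e) * e = e * s * e"
      using idem(2) by (metis mult.assoc)+
    show "e * t * e * (e * s * e) = e"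
      using et ts eq idem(2) by (metis mult.assoc)
    have "e = e * (s * t)"
      using st eq by simp
    also have "\<dots> = e * (s * q) * t"
      using sq by (simp add: mult.assoc)
    also have "\<dots> = e * s * p * t + e * s * e * t"
      by (simp add: q_def algebra_simps)
    finally have "e * s * e * t = e"
      using \<open>e * s * p = 0\<close> by simp
    then show "e * s * e * (e * t * e) = e"
      using idem(2) et by (metis mult.assoc)
  qed
qed

context
  fixes a b x y p q e :: "'a::complex_banach_star_algebra"
  assumes x: "is_gcEP a x" and y: "is_gcEP b y" and bx: "b * x = a * x" and xb: "x * b = x * a"
  defines "p \<equiv> a * x" and "q \<equiv> b * y" and "e \<equiv> b * y - a * x"
begin

lemma gcEP_le_range_le: "q * p = p" "p * q = p"
proof -
  have "p = b ^ (k + 1) * x * x ^ k" for k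
    using power_mult_power_eq[OF bx gcEP_proj_mult[OF x], of k] bx
    by (metis p_def mult.assoc power_Suc2 Suc_eq_plus1)
  then show range: "q * p = p"
    unfolding q_def by (rule gcEP_absorb[OF y])
  show "p * q = p"
    using selfadjoint_absorb_sym[OF gcEP_adj_proj[OF x] gcEP_adj_proj[OF y]] range
    by (simp add: p_def q_def)
qed

lemma gcEP_le_diff_proj: "adj e = e" "e * e = e" "p * e = 0" "e * p = 0" "e * q = e" "q * e = e"
proof -
  have "p * p = p" "q * q = q"
    using gcEP_proj_idem[OF x] gcEP_proj_idem[OF y] by (simp_all add: p_def q_def)
  then show "e * e = e" "p * e = 0" "e * p = 0" "e * q = e" "q * e = e"
    using gcEP_le_range_le
    by (simp_all add: e_def p_def[symmetric] q_def[symmetric] algebra_simps)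
  show "adj e = e"
    using gcEP_adj_proj[OF x] gcEP_adj_proj[OF y] by (simp add: e_def adj_diff)
qed

lemma gcEP_le_agree_on_proj: "b * p = a * p" "p * b = p * a"
proof -
  show "b * p = a * p"
    using gcEP_upper_triangular[OF x] gcEP_mult_mult_proj[OF x] bx by (metis p_def mult.assoc)
  show "p * b = p * a"
    using xb by (simp add: p_def mult.assoc)
qed

lemma gcEP_le_lower_blocks:
  "e * a * p = 0" "(1 - p - e) * a * p = 0" "e * b * p = 0" "(1 - p - e) * b * p = 0"
  "(1 - p - e) * b * e = 0"
proof -
  have rest: "1 - p - e = 1 - q"
    by (simp add: e_def p_def q_def)
  have below: "z * a * p = 0" "z * b * p = 0" if "z * p = 0" for z
    using that gcEP_upper_triangular[OF x, folded p_def] gcEP_le_agree_on_proj(1)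
    by (metis mult.assoc mult_zero_left)+
  have "(1 - q) * p = 0"
    using gcEP_le_range_le by (simp add: algebra_simps)
  with gcEP_le_diff_proj
  show "e * a * p = 0" "(1 - p - e) * a * p = 0" "e * b * p = 0" "(1 - p - e) * b * p = 0"
    by (simp_all add: rest below)
  have "(1 - q) * b * q = 0"
    using gcEP_upper_triangular[OF y] by (simp add: q_def algebra_simps)
  with \<open>(1 - p - e) * b * p = 0\<close> show "(1 - p - e) * b * e = 0"
    by (simp add: rest e_def p_def[symmetric] q_def[symmetric] right_diff_distrib)
qed

lemma gcEP_le_corner_inv: "corner_inv e (e * b * e)"
proof -
  note e = gcEP_le_diff_proj
  have "p * p = p"
    using gcEP_proj_idem[OF x] by (simp add: p_def)
  have "corner_inv e (e * (q * b * q) * e)"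
  proof (rule corner_inv_lower_block[OF \<open>p * p = p\<close> e(2-4)])
    show "corner_inv (p + e) (q * b * q)"
      using gcEP_corner_inv[OF y] by (simp add: e_def p_def q_def)
    have "p * (q * b * q) * p = p * a * p"
      by (metis gcEP_le_range_le gcEP_le_agree_on_proj(1) mult.assoc)
    then show "corner_inv p (p * (q * b * q) * p)"
      using gcEP_corner_inv[OF x] by (simp add: p_def)
    show "e * (q * b * q) * p = 0"
      using e(5) gcEP_le_range_le(1) gcEP_le_lower_blocks(3) by (metis mult.assoc)
  qed
  then show ?thesis
    using e(5,6) by (metis mult.assoc)
qed

lemma gcEP_le_qnil:
  "e * a * e + e * a * (1 - p - e) + (1 - p - e) * a * e + (1 - p - e) * a * (1 - p - e) \<in> qnil"
    (is "?n \<in> qnil")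
  "(1 - p - e) * b * (1 - p - e) \<in> qnil"
proof -
  have "?n = (e + (1 - p - e)) * a * (e + (1 - p - e))"
    by (simp add: algebra_simps)
  then show "?n \<in> qnil"
    using gcEP_qnil[OF x] by (simp add: p_def)
  show "(1 - p - e) * b * (1 - p - e) \<in> qnil"
    using gcEP_qnil[OF y] by (simp add: e_def p_def)
qed

end

lemma gcEP_le_of_block_form:
  fixes a b x :: "'a::complex_banach_star_algebra"
  assumes x: "is_gcEP a x" and p: "p = a * x" and unit: "p + e2 + e3 = 1"
    and row: "p * a * p = p * b * p" "p * a * e2 = p * b * e2" "p * a * e3 = p * b * e3"
    and column: "e2 * a * p = e2 * b * p" "e3 * a * p = e3 * b * p"
  shows "a * x = b * x" and "x * a = x * b"
proof -
  have "a * p = b * p"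
    using mult_right_eq_by_rows[OF unit row(1) column] .
  then show "a * x = b * x"
    using gcEP_proj_mult[OF x] by (metis p mult.assoc)
  have "p * a = p * b"
    using mult_left_eq_by_columns[OF unit row] .
  then show "x * a = x * b"
    using gcEP_mult_proj[OF x] by (metis p mult.assoc)
qed

theorem theorem4p4:
  fixes a b :: "'a :: complex_banach_star_algebra"
  assumes "a \<in> gcEP_set" and "b \<in> gcEP_set"
  shows "gcEP_le a b \<longleftrightarrow>
    (\<exists>e1 e2 t1 s1 s2 n1 n2 n3 n4 t3 t4 t5.
       e1 = a * gcEP a \<and> e2 = adj e2 \<and> e2 = e2 ^ 2 \<and>
       e1 * e1 = e1 \<and> e1 * e2 = 0 \<and> e2 * e1 = 0 \<and>
       (let e3 = 1 - e1 - e2 in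
         e1 * a * e1 = t1 \<and> e1 * a * e2 = s1 \<and> e1 * a * e3 = s2 \<and>
         e2 * a * e1 = 0 \<and> e2 * a * e2 = n1 \<and> e2 * a * e3 = n2 \<and>
         e3 * a * e1 = 0 \<and> e3 * a * e2 = n3 \<and> e3 * a * e3 = n4 \<and>
         e1 * b * e1 = t1 \<and> e1 * b * e2 = s1 \<and> e1 * b * e3 = s2 \<and>
         e2 * b * e1 = 0 \<and> e2 * b * e2 = t3 \<and> e2 * b * e3 = t4 \<and>
         e3 * b * e1 = 0 \<and> e3 * b * e2 = 0 \<and> e3 * b * e3 = t5) \<and>
       corner_inv e1 t1 \<and> corner_inv e2 t3 \<and>
       n1 + n2 + n3 + n4 \<in> qnil \<and> t5 \<in> qnil)"
  (is "_ \<longleftrightarrow> ?blocks")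
proof -
  define x where "x = gcEP a"
  have x: "is_gcEP a x"
    unfolding x_def using assms(1) by (rule is_gcEP_gcEP)
  obtain y where y: "is_gcEP b y"
    using assms(2) unfolding gcEP_set_def by blast
  have le: "gcEP_le a b \<longleftrightarrow> a * x = b * x \<and> x * a = x * b"
    by (simp add: gcEP_le_def x_def)
  show ?thesis
  proof
    assume "gcEP_le a b"
    then have "b * x = a * x" "x * b = x * a"
      using le by simp_all
    note blocks = gcEP_le_diff_proj[OF x y this] gcEP_le_agree_on_proj[OF x y this]
      gcEP_le_lower_blocks[OF x y this] gcEP_le_corner_inv[OF x y this] gcEP_le_qnil[OF x y this]
    show ?blocks
      by (rule exI[of _ "a * x"], rule exI[of _ "b * y - a * x"])
        (use blocks in \<open>simp add: x_def[symmetric] Let_def power2_eq_square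
          gcEP_proj_idem[OF x] gcEP_corner_inv[OF x]\<close>)
  next
    assume ?blocks
    then obtain e
      where "a * x * a * (a * x) = a * x * b * (a * x)" "a * x * a * e = a * x * b * e"
        "a * x * a * (1 - a * x - e) = a * x * b * (1 - a * x - e)"
        "e * a * (a * x) = e * b * (a * x)"
        "(1 - a * x - e) * a * (a * x) = (1 - a * x - e) * b * (a * x)"
      unfolding x_def[symmetric] Let_def by (elim exE conjE) metis
    from gcEP_le_of_block_form[OF x refl _ this] show "gcEP_le a b"
      using le by simp
  qed
qed

end
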